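(* Let $(\mathcal{A},\mathbf{m})$ be a multiarrangement in $\mathbb{Q}^l$ with $\mathcal{A}=\{H_1,\dots,H_n\}$, $H_i=\alpha_i^{-1}(0)$, where the $\alpha_i\in S_\mathbb{Z}=\mathbb{Z}[x_1,\dots,x_l]$ are linear forms such that no prime number divides any $\alpha_i$, and let $p$ be a good prime for $(\mathcal{A},\mathbf{m})$. If $p$ is not a zero divisor of $\operatorname{coker}(\varphi_\mathbb{Z})$, then the map $\pi_p^l\colon\operatorname{Ker}(\varphi_\mathbb{Z})\to D(\mathcal{A}_p,\mathbf{m})$ is surjective.
   Context: For a field $\mathbb{K}$ and $R=\mathbb{K}[x_1,\dots,x_l]$, for a multiarrangement with hyperplanes $\beta_i^{-1}(0)$ and multiplicities $\mathbf{m}_i\ge0$, $D=\{\delta=\sum_j f_j\partial_{x_j}: f_j\in R,\ \delta(\beta_i)\in\beta_i^{\mathbf{m}_i}R\ \forall i\}$, identified with a submodule of $R^l$. Let $S_p=\mathbb{F}_p[x_1,\dots,x_l]$, $\pi_p\colon S_\mathbb{Z}\to S_p$ reduction mod $p$, $\pi_p^k$ its componentwise extension to $S_\mathbb{Z}^k\to S_p^k$. A prime $p$ is good if $\pi_p(\alpha_i)\ne\pi_p(\alpha_j)$ for $i\ne j$; then $(\mathcal{A}_p,\mathbf{m})$ is the multiarrangement in $\mathbb{F}_p^l$ with hyperplanes $\pi_p(\alpha_i)^{-1}(0)$ of multiplicities $\mathbf{m}(H_i)$. Let $M(\mathcal{A},\mathbf{m})\subseteq S_\mathbb{Z}^n$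 be generated by $\alpha_i^{\mathbf{m}(H_i)}e_i$, $A(\mathcal{A})=(\partial\alpha_i/\partial x_j)_{i,j}$, and $\varphi_\mathbb{Z}\colon S_\mathbb{Z}^l\to S_\mathbb{Z}^n/M(\mathcal{A},\mathbf{m})$, $g\mapsto A(\mathcal{A})g$. The integer $p$ is a zero divisor of an $S_\mathbb{Z}$-module $N$ if $pv=0$ for some nonzero $v\in N$. *)

theory Defs
  imports "HOL-Library.Poly_Mapping" "Berlekamp_Zassenhaus.Finite_Field"
begin

text \<open>Multivariate polynomials: finitely supported maps from monomials (exponent
  vectors, variable x_(j+1) has index j) to coefficients.  The ring
  S_K = K[x_1,...,x_l] is the set of such polynomials only involving variables
  with index < l.\<close>

type_synonym 'a mpoly = "(nat \<Rightarrow>\<^sub>0 nat) \<Rightarrow>\<^sub>0 'a"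

definition const :: "'a::zero \<Rightarrow> 'a mpoly" where
  "const c = Poly_Mapping.single 0 c"

definition Var :: "nat \<Rightarrow> 'a::{zero,one} mpoly" where
  "Var j = Poly_Mapping.single (Poly_Mapping.single j 1) 1"

definition in_S :: "nat \<Rightarrow> 'a::zero mpoly \<Rightarrow> bool" where
  "in_S l q \<longleftrightarrow> (\<forall>mon\<in>Poly_Mapping.keys q. \<forall>v\<in>Poly_Mapping.keys mon. v < l)"

definition in_Sk :: "nat \<Rightarrow> nat \<Rightarrow> (nat \<Rightarrow> 'a::zero mpoly) \<Rightarrow> bool" where
  "in_Sk k l f \<longleftrightarrow> (\<forall>j<k. in_S l (f j)) \<and> (\<forall>j\<ge>k. f j = 0)"

definition S_dvd :: "nat \<Rightarrow> 'a::comm_ring_1 mpoly \<Rightarrow> 'a mpoly \<Rightarrow> bool" where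
  "S_dvd l u w \<longleftrightarrow> (\<exists>h. in_S l h \<and> w = u * h)"

definition lin_form :: "nat \<Rightarrow> (nat \<Rightarrow> 'a::comm_ring_1) \<Rightarrow> 'a mpoly" where
  "lin_form l c = (\<Sum>j<l. const (c j) * Var j)"

text \<open>Module of logarithmic derivations D(A,m) over K for the multiarrangement with
  defining linear forms alpha_i = lin_form l (coef i), i < n, multiplicities m i.
  For delta = sum_j f_j d/dx_j we have delta(alpha_i) = sum_j f_j * coef i j.\<close>
definition Dmod :: "nat \<Rightarrow> nat \<Rightarrow> (nat \<Rightarrow> nat \<Rightarrow> 'a::comm_ring_1) \<Rightarrow> (nat \<Rightarrow> nat)
    \<Rightarrow> (nat \<Rightarrow> 'a mpoly) set" where
  "Dmod l n coef m = {f. in_Sk l l f \<and>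
     (\<forall>i<n. S_dvd l (lin_form l (coef i) ^ m i) (\<Sum>j<l. f j * const (coef i j)))}"

definition red :: "int mpoly \<Rightarrow> 'p::prime_card mod_ring mpoly" where
  "red q = Poly_Mapping.map of_int q"

text \<open>M(A,m) subset of S_Z^n, generated by alpha_i^(m_i) e_i\<close>
definition Mmod :: "nat \<Rightarrow> nat \<Rightarrow> (nat \<Rightarrow> nat \<Rightarrow> int) \<Rightarrow> (nat \<Rightarrow> nat) \<Rightarrow> (nat \<Rightarrow> int mpoly) set" where
  "Mmod l n a m = {u. in_Sk n l u \<and> (\<forall>i<n. S_dvd l (lin_form l (a i) ^ m i) (u i))}"

text \<open>g \<mapsto> A(A) g, with A(A)_{ij} = d alpha_i / d x_j = a i j\<close>
definition Amul :: "nat \<Rightarrow> nat \<Rightarrow> (nat \<Rightarrow> nat \<Rightarrow> int) \<Rightarrow> (nat \<Rightarrow> int mpoly) \<Rightarrow> (nat \<Rightarrow> int mpoly)" where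
  "Amul l n a g = (\<lambda>i. if i < n then (\<Sum>j<l. const (a i j) * g j) else 0)"

text \<open>Ker(phi_Z), phi_Z : S_Z^l -> S_Z^n / M\<close>
definition ker_phiZ :: "nat \<Rightarrow> nat \<Rightarrow> (nat \<Rightarrow> nat \<Rightarrow> int) \<Rightarrow> (nat \<Rightarrow> nat) \<Rightarrow> (nat \<Rightarrow> int mpoly) set" where
  "ker_phiZ l n a m = {g. in_Sk l l g \<and> Amul l n a g \<in> Mmod l n a m}"

text \<open>coker(phi_Z) = S_Z^n / (M + im(A(A))); the submodule M + A(A) S_Z^l\<close>
definition coker_rel :: "nat \<Rightarrow> nat \<Rightarrow> (nat \<Rightarrow> nat \<Rightarrow> int) \<Rightarrow> (nat \<Rightarrow> nat) \<Rightarrow> (nat \<Rightarrow> int mpoly) set" where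
  "coker_rel l n a m = {\<lambda>i. u i + Amul l n a g i | u g. u \<in> Mmod l n a m \<and> in_Sk l l g}"

definition zero_divisor_coker :: "nat \<Rightarrow> nat \<Rightarrow> (nat \<Rightarrow> nat \<Rightarrow> int) \<Rightarrow> (nat \<Rightarrow> nat) \<Rightarrow> int \<Rightarrow> bool" where
  "zero_divisor_coker l n a m p \<longleftrightarrow>
     (\<exists>v. in_Sk n l v \<and> v \<notin> coker_rel l n a m \<and> (\<lambda>i. const p * v i) \<in> coker_rel l n a m)"

end

theory Submission
  imports Defs
begin

(* Lift a derivation \<delta> of the reduced arrangement coefficientwise to g0 over \<int>. Reducing A g0
  mod p gives \<delta>(\<alpha>_i), which is divisible by \<alpha>_i^m_i, so A g0 \<equiv> -u mod p for some u \<in> M,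
  i.e. p w = u + A g0 for some w. Then p kills the class of w in coker(\<phi>_\<int>); since p is not a
  zero divisor there, w = u1 + A g1 with u1 \<in> M, and g = g0 - p g1 satisfies
  A g = p u1 - u \<in> M while still reducing to \<delta>. *)

lemma lookup_map_poly_mapping:
  "f 0 = 0 \<Longrightarrow> Poly_Mapping.lookup (Poly_Mapping.map f q) k = f (Poly_Mapping.lookup q k)"
  by (simp add: Poly_Mapping.map.rep_eq when_def)

lemma update_eq_add_single:
  "k \<notin> Poly_Mapping.keys f \<Longrightarrow> Poly_Mapping.update k b f = f + Poly_Mapping.single k b"
  by (rule poly_mapping_eqI) (auto simp: lookup_update lookup_add lookup_single when_def in_keys_iff)

lemma comm_ring_hom_map_poly_mapping:
  assumes "comm_ring_hom h"
  shows "comm_ring_hom (Poly_Mapping.map h :: ('m::comm_monoid_add \<Rightarrow>\<^sub>0 'a::comm_ring_1) \<Rightarrow> _)"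
proof -
  interpret h: comm_ring_hom h by (fact assms)
  have map_zero: "Poly_Mapping.map h (0 :: 'm \<Rightarrow>\<^sub>0 'a) = 0"
    by (rule poly_mapping_eqI) (simp add: lookup_map_poly_mapping)
  have map_add: "Poly_Mapping.map h (f + g) = Poly_Mapping.map h f + Poly_Mapping.map h g"
    for f g :: "'m \<Rightarrow>\<^sub>0 'a"
    by (rule poly_mapping_eqI) (simp add: lookup_map_poly_mapping lookup_add h.hom_add)
  have map_single_mult: "Poly_Mapping.map h (Poly_Mapping.single k c * g)
      = Poly_Mapping.single k (h c) * Poly_Mapping.map h g" for k c and g :: "'m \<Rightarrow>\<^sub>0 'a"
    by (induction g rule: Poly_Mapping.update_induct)
      (simp_all add: map_zero update_eq_add_single distrib_left map_add mult_single h.hom_mult)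
  have map_mult: "Poly_Mapping.map h (f * g) = Poly_Mapping.map h f * Poly_Mapping.map h g"
    for f g :: "'m \<Rightarrow>\<^sub>0 'a"
    by (induction f rule: Poly_Mapping.update_induct)
      (simp_all add: map_zero update_eq_add_single distrib_right map_add map_single_mult)
  have map_one: "Poly_Mapping.map h (1 :: 'm \<Rightarrow>\<^sub>0 'a) = 1"
    by (rule poly_mapping_eqI) (simp add: lookup_map_poly_mapping lookup_one when_def)
  show ?thesis
    by unfold_locales (simp_all add: map_zero map_one map_add map_mult)
qed

interpretation red_hom: comm_ring_hom "red :: int mpoly \<Rightarrow> 'p::prime_card mod_ring mpoly"
  unfolding red_def by (rule comm_ring_hom_map_poly_mapping) (fact of_int_hom.comm_ring_hom_axioms)

lemma red_const: "(red (const c) :: 'p::prime_card mod_ring mpoly) = const (of_int c)"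
  by (simp add: red_def const_def)

lemma red_Var: "(red (Var j) :: 'p::prime_card mod_ring mpoly) = Var j"
  by (simp add: red_def Var_def)

lemma red_lin_form: "(red (lin_form l c) :: 'p::prime_card mod_ring mpoly) = lin_form l (\<lambda>j. of_int (c j))"
  by (simp add: lin_form_def red_hom.hom_sum red_hom.hom_mult red_const red_Var)

lemma red_const_card: "(red (const (int CARD('p))) :: 'p::prime_card mod_ring mpoly) = 0"
  unfolding red_const by (simp add: const_def)

lemma in_S_subset: "Poly_Mapping.keys q \<subseteq> Poly_Mapping.keys q' \<Longrightarrow> in_S l q' \<Longrightarrow> in_S l q"
  unfolding in_S_def by blast

lemma in_S_zero [simp]: "in_S l 0"
  by (simp add: in_S_def)

lemma in_S_add: "in_S l q1 \<Longrightarrow> in_S l q2 \<Longrightarrow> in_S l (q1 + q2)"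
  unfolding in_S_def using keys_add[of q1 q2] by blast

lemma in_S_uminus: "in_S l (q::'a::ab_group_add mpoly) \<Longrightarrow> in_S l (- q)"
  unfolding in_S_def by simp

lemma in_S_diff: "in_S l (q1::'a::ab_group_add mpoly) \<Longrightarrow> in_S l q2 \<Longrightarrow> in_S l (q1 - q2)"
  using in_S_add[of l q1 "- q2"] in_S_uminus[of l q2] by simp

lemma in_S_mult:
  fixes q1 q2 :: "'a::comm_semiring_1 mpoly"
  assumes "in_S l q1" and "in_S l q2"
  shows "in_S l (q1 * q2)"
  unfolding in_S_def
proof (intro ballI)
  fix mon v assume "mon \<in> Poly_Mapping.keys (q1 * q2)" and v: "v \<in> Poly_Mapping.keys mon"
  then obtain x y where "mon = x + y" "x \<in> Poly_Mapping.keys q1" "y \<in> Poly_Mapping.keys q2"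
    using keys_mult[of q1 q2] by blast
  with v keys_add[of x y] assms show "v < l"
    unfolding in_S_def by blast
qed

lemma in_S_const [simp]: "in_S l (const c)"
  by (simp add: in_S_def const_def)

lemma in_S_Var: "j < l \<Longrightarrow> in_S l (Var j :: 'a::zero_neq_one mpoly)"
  by (simp add: in_S_def Var_def)

lemma in_S_one: "in_S l 1"
  by (simp add: in_S_def lookup_one)

lemma in_S_sum: "(\<And>j. j \<in> A \<Longrightarrow> in_S l (f j)) \<Longrightarrow> in_S l (\<Sum>j\<in>A. f j)"
  by (induction A rule: infinite_finite_induct) (auto intro: in_S_add)

lemma in_S_power: "in_S l (q::'a::comm_semiring_1 mpoly) \<Longrightarrow> in_S l (q ^ k)"
  by (induction k) (auto intro: in_S_mult in_S_one)

lemma in_S_lin_form: "in_S l (lin_form l c)"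
  unfolding lin_form_def by (auto intro!: in_S_sum in_S_mult in_S_Var)

definition lift_mod_p :: "'p::prime_card mod_ring mpoly \<Rightarrow> int mpoly" where
  "lift_mod_p q = Poly_Mapping.map to_int_mod_ring q"

lemma red_lift_mod_p: "red (lift_mod_p q) = q"
  by (rule poly_mapping_eqI)
    (simp add: red_def lift_mod_p_def lookup_map_poly_mapping of_int_of_int_mod_ring)

lemma lift_mod_p_0 [simp]: "lift_mod_p 0 = 0"
  by (rule poly_mapping_eqI) (simp add: lift_mod_p_def lookup_map_poly_mapping)

lemma in_S_lift_mod_p: "in_S l q \<Longrightarrow> in_S l (lift_mod_p q)"
  by (rule in_S_subset[of _ q]) (auto simp: lift_mod_p_def in_keys_iff lookup_map_poly_mapping)

lemma red_eq_0_iff_S_dvd_card: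
  assumes "in_S l Q"
  shows "(red Q :: 'p::prime_card mod_ring mpoly) = 0 \<longleftrightarrow> S_dvd l (const (int CARD('p))) Q"
proof
  assume red: "(red Q :: 'p mod_ring mpoly) = 0"
  define P where "P = int CARD('p)"
  have "(of_int (Poly_Mapping.lookup Q k) :: 'p mod_ring) = 0" for k
    using arg_cong[OF red, of "\<lambda>q. Poly_Mapping.lookup q k"]
    by (simp add: red_def lookup_map_poly_mapping)
  then have P_dvd: "P dvd Poly_Mapping.lookup Q k" for k
    unfolding P_def of_int_of_int_mod_ring by transfer (simp add: dvd_eq_mod_eq_0)
  define W where "W = Poly_Mapping.map (\<lambda>c. c div P) Q"
  have "Q = const P * W"
    by (rule poly_mapping_eqI)
      (simp add: W_def const_def mult_map_scale_conv_mult[symmetric] lookup_map_poly_mapping P_dvd)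
  moreover have "in_S l W"
    using assms by (rule in_S_subset[rotated]) (auto simp: W_def in_keys_iff lookup_map_poly_mapping)
  ultimately show "S_dvd l (const (int CARD('p))) Q"
    unfolding S_dvd_def P_def by blast
next
  assume "S_dvd l (const (int CARD('p))) Q"
  then show "(red Q :: 'p mod_ring mpoly) = 0"
    by (auto simp: S_dvd_def red_hom.hom_mult red_const_card)
qed

lemma in_Sk_Amul: "in_Sk l l g \<Longrightarrow> in_Sk n l (Amul l n a g)"
  unfolding in_Sk_def Amul_def by (auto intro!: in_S_sum in_S_mult)

lemma Amul_diff_const_mult:
  "Amul l n a (\<lambda>j. g j - const c * g' j) = (\<lambda>i. Amul l n a g i - const c * Amul l n a g' i)"
  by (auto simp: Amul_def sum_subtractf sum_distrib_left algebra_simps)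

lemma red_Amul:
  "i < n \<Longrightarrow> (red (Amul l n a g i) :: 'p::prime_card mod_ring mpoly)
     = (\<Sum>j<l. red (g j) * const (of_int (a i j)))"
  by (simp add: Amul_def red_hom.hom_sum red_hom.hom_mult red_const mult.commute)

lemma Mmod_diff:
  assumes "u \<in> Mmod l n a m" and "v \<in> Mmod l n a m"
  shows "(\<lambda>i. u i - v i) \<in> Mmod l n a m"
  unfolding Mmod_def
proof (intro CollectI conjI allI impI)
  show "in_Sk n l (\<lambda>i. u i - v i)"
    using assms by (auto simp: Mmod_def in_Sk_def intro: in_S_diff)
next
  fix i assume "i < n"
  with assms obtain hu hv where "in_S l hu" "u i = lin_form l (a i) ^ m i * hu"
    and "in_S l hv" "v i = lin_form l (a i) ^ m i * hv"
    unfolding Mmod_def S_dvd_def by blast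
  then show "S_dvd l (lin_form l (a i) ^ m i) (u i - v i)"
    unfolding S_dvd_def by (auto intro!: exI[of _ "hu - hv"] in_S_diff simp: right_diff_distrib)
qed

lemma Mmod_const_mult:
  assumes "u \<in> Mmod l n a m"
  shows "(\<lambda>i. const c * u i) \<in> Mmod l n a m"
  unfolding Mmod_def
proof (intro CollectI conjI allI impI)
  show "in_Sk n l (\<lambda>i. const c * u i)"
    using assms by (auto simp: Mmod_def in_Sk_def intro: in_S_mult)
next
  fix i assume "i < n"
  with assms obtain hu where "in_S l hu" "u i = lin_form l (a i) ^ m i * hu"
    unfolding Mmod_def S_dvd_def by blast
  then show "S_dvd l (lin_form l (a i) ^ m i) (const c * u i)"
    unfolding S_dvd_def by (auto intro!: exI[of _ "const c * hu"] in_S_mult simp: mult.left_commute)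
qed

lemma Dmod_liftE:
  assumes "\<delta> \<in> Dmod l n (\<lambda>i j. of_int (a i j) :: 'p::prime_card mod_ring) m"
  obtains g0 u w where "in_Sk l l g0" and "(\<lambda>j. red (g0 j)) = \<delta>"
    and "u \<in> Mmod l n a m" and "in_Sk n l w"
    and "(\<lambda>i. const (int CARD('p)) * w i) = (\<lambda>i. u i + Amul l n a g0 i)"
proof -
  define \<alpha> where "\<alpha> i = lin_form l (a i)" for i
  have \<delta>_S: "in_Sk l l \<delta>"
    using assms by (simp add: Dmod_def)
  have "\<forall>i<n. \<exists>h. in_S l h \<and> (\<Sum>j<l. \<delta> j * const (of_int (a i j))) = red (\<alpha> i) ^ m i * h"
    using assms by (simp add: Dmod_def S_dvd_def \<alpha>_def red_lin_form)
  then obtain h where h_S: "\<And>i. i < n \<Longrightarrow> in_S l (h i)"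
    and h: "\<And>i. i < n \<Longrightarrow> (\<Sum>j<l. \<delta> j * const (of_int (a i j))) = red (\<alpha> i) ^ m i * h i"
    unfolding choice_iff' by blast
  define g0 where "g0 j = lift_mod_p (\<delta> j)" for j
  define u where "u i = (if i < n then - (\<alpha> i ^ m i * lift_mod_p (h i)) else 0)" for i
  have g0_S: "in_Sk l l g0"
    using \<delta>_S by (simp add: in_Sk_def g0_def in_S_lift_mod_p)
  have red_g0: "(\<lambda>j. red (g0 j)) = \<delta>"
    by (simp add: g0_def red_lift_mod_p)
  have u_M: "u \<in> Mmod l n a m"
    unfolding Mmod_def in_Sk_def S_dvd_def u_def \<alpha>_def
    using h_S by (auto intro!: exI[of _ "- lift_mod_p (h i)" for i] in_S_uminus in_S_mult in_S_power
        in_S_lin_form in_S_lift_mod_p)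
  have "\<forall>i<n. S_dvd l (const (int CARD('p))) (u i + Amul l n a g0 i)"
  proof (intro allI impI)
    fix i assume "i < n"
    have "in_S l (u i + Amul l n a g0 i)"
      using u_M in_Sk_Amul[OF g0_S] \<open>i < n\<close> by (auto simp: Mmod_def in_Sk_def intro: in_S_add)
    moreover have "(red (u i + Amul l n a g0 i) :: 'p mod_ring mpoly) = 0"
      using h[OF \<open>i < n\<close>] \<open>i < n\<close>
      by (simp add: u_def red_Amul g0_def red_hom.hom_minus red_hom.hom_mult red_hom.hom_power red_lift_mod_p)
    ultimately show "S_dvd l (const (int CARD('p))) (u i + Amul l n a g0 i)"
      by (simp add: red_eq_0_iff_S_dvd_card)
  qed
  then obtain w where w_S: "\<And>i. i < n \<Longrightarrow> in_S l (w i)"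
    and w: "\<And>i. i < n \<Longrightarrow> u i + Amul l n a g0 i = const (int CARD('p)) * w i"
    unfolding S_dvd_def choice_iff' by blast
  show thesis
  proof (rule that[OF g0_S red_g0 u_M])
    show "in_Sk n l (\<lambda>i. if i < n then w i else 0)"
      using w_S by (simp add: in_Sk_def)
    show "(\<lambda>i. const (int CARD('p)) * (if i < n then w i else 0)) = (\<lambda>i. u i + Amul l n a g0 i)"
      using w by (auto simp: u_def Amul_def)
  qed
qed

theorem proposition4p3:
  fixes l n :: nat and a :: "nat \<Rightarrow> nat \<Rightarrow> int" and m :: "nat \<Rightarrow> nat"
  assumes primitive: "\<forall>i<n. \<forall>q::int. prime q \<longrightarrow> \<not> (\<forall>j<l. q dvd a i j)"
    and distinct_hyperplanes: "\<forall>i<n. \<forall>j<n. i \<noteq> j \<longrightarrow>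
        \<not> (\<exists>c::rat. \<forall>k<l. rat_of_int (a i k) = c * rat_of_int (a j k))"
    and good: "\<forall>i<n. \<forall>j<n. i \<noteq> j \<longrightarrow>
        (red (lin_form l (a i)) :: 'p::prime_card mod_ring mpoly) \<noteq> red (lin_form l (a j))"
    and not_zd: "\<not> zero_divisor_coker l n a m (int CARD('p))"
  shows "\<forall>\<delta> \<in> Dmod l n (\<lambda>i j. of_int (a i j) :: 'p mod_ring) m.
           \<exists>g \<in> ker_phiZ l n a m. (\<lambda>j. red (g j)) = \<delta>"
proof
  fix \<delta> assume "\<delta> \<in> Dmod l n (\<lambda>i j. of_int (a i j) :: 'p mod_ring) m"
  then obtain g0 u w where g0_S: "in_Sk l l g0" and red_g0: "(\<lambda>j. red (g0 j)) = \<delta>"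
    and u_M: "u \<in> Mmod l n a m" and w_S: "in_Sk n l w"
    and pw: "(\<lambda>i. const (int CARD('p)) * w i) = (\<lambda>i. u i + Amul l n a g0 i)"
    by (rule Dmod_liftE)
  have "w \<in> coker_rel l n a m"
    using not_zd w_S pw u_M g0_S unfolding zero_divisor_coker_def coker_rel_def by blast
  then obtain u1 g1 where w: "w = (\<lambda>i. u1 i + Amul l n a g1 i)"
    and u1_M: "u1 \<in> Mmod l n a m" and g1_S: "in_Sk l l g1"
    unfolding coker_rel_def by blast
  define g where "g j = g0 j - const (int CARD('p)) * g1 j" for j
  have "Amul l n a g = (\<lambda>i. const (int CARD('p)) * u1 i - u i)"
    using fun_cong[OF pw] unfolding g_def Amul_diff_const_mult w by (auto simp: algebra_simps)
  then have "g \<in> ker_phiZ l n a m"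
    using g0_S g1_S u_M u1_M
    by (auto simp: ker_phiZ_def in_Sk_def g_def intro!: in_S_diff in_S_mult Mmod_diff Mmod_const_mult)
  moreover have "(\<lambda>j. red (g j)) = \<delta>"
    by (simp add: g_def red_hom.hom_minus red_hom.hom_mult red_const_card red_g0[symmetric])
  ultimately show "\<exists>g \<in> ker_phiZ l n a m. (\<lambda>j. red (g j)) = \<delta>"
    by blast
qed

end
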